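(* If $\mathcal{G}_1=([n],\mathcal{E}_1)$ and $\mathcal{G}_2=([n],\mathcal{E}_2)$ are simple plurigraphs with $Y_{\mathcal{G}_1}=Y_{\mathcal{G}_2}$, then $\mathcal{E}_1=\mathcal{E}_2$; that is, a simple plurigraph $\mathcal{G}$ can be reconstructed from $Y_{\mathcal{G}}$.
   Context: A graph $(V,E)$ has $E$ a multiset of unordered pairs of (not necessarily distinct) vertices. A plurigraph $\mathcal{G}=(V,\mathcal{E})$ has $\mathcal{E}$ a finite multiset of graphs $(V,E)$ on the vertex set $V$ with $E\neq\emptyset$. A proper coloring is $f:V\to\mathbb{P}=\{1,2,\dots\}$ such that every $(V,E)\in\mathcal{E}$ contains an edge $uv$ with $f(u)\ne f(v)$; for $V=[n]$, $Y_{\mathcal{G}}=\sum_f y_{f(1)}\cdots y_{f(n)}$ over proper colorings, in noncommuting variables $y_1,y_2,\dots$. For graphs $G_1,G_2$ on $V$, $G_1\prec G_2$ means every connected component of $G_1$ is contained in some connected component of $G_2$. $\mathcal{G}$ is a simple plurigraph if (i) for each $G\in\mathcal{E}$, every connected component of $G$ is a (simple, loopless) complete graph, and (ii) there do not exist two distinct members $G_1\ne G_2$ of $\mathcal{E}$ with $G_1\prec G_2$ (so in particular no pluriedge occurs twice). *)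

theory Defs
  imports Main "HOL-Library.Multiset" "HOL-Library.Uprod" "HOL-Library.FuncSet"
begin

text \<open>A graph on the vertex set [n] = {1..n}: a multiset of unordered pairs
(loops Upair v v allowed). A plurigraph on [n]: a finite multiset of such graphs.\<close>

type_synonym graph = "nat uprod multiset"
type_synonym plurigraph = "graph multiset"

definition is_graph :: "nat \<Rightarrow> graph \<Rightarrow> bool" where
  "is_graph n G \<longleftrightarrow> (\<forall>e\<in>#G. set_uprod e \<subseteq> {1..n})"

definition is_plurigraph :: "nat \<Rightarrow> plurigraph \<Rightarrow> bool" where
  "is_plurigraph n \<E> \<longleftrightarrow> (\<forall>G\<in>#\<E>. is_graph n G \<and> G \<noteq> {#})"

definition adj :: "graph \<Rightarrow> nat \<Rightarrow> nat \<Rightarrow> bool" where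
  "adj G u v \<longleftrightarrow> Upair u v \<in># G"

definition components :: "nat \<Rightarrow> graph \<Rightarrow> nat set set" where
  "components n G = {{u \<in> {1..n}. (adj G)\<^sup>*\<^sup>* v u} | v. v \<in> {1..n}}"

definition prec :: "nat \<Rightarrow> graph \<Rightarrow> graph \<Rightarrow> bool" where
  "prec n G1 G2 \<longleftrightarrow> (\<forall>C\<in>components n G1. \<exists>D\<in>components n G2. C \<subseteq> D)"

definition complete_components :: "nat \<Rightarrow> graph \<Rightarrow> bool" where
  "complete_components n G \<longleftrightarrow>
     (\<forall>e. count G e \<le> 1) \<and> (\<forall>u. Upair u u \<notin># G) \<and>
     (\<forall>C\<in>components n G. \<forall>u\<in>C. \<forall>v\<in>C. u \<noteq> v \<longrightarrow> Upair u v \<in># G)"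

definition simple_plurigraph :: "nat \<Rightarrow> plurigraph \<Rightarrow> bool" where
  "simple_plurigraph n \<E> \<longleftrightarrow> is_plurigraph n \<E> \<and>
     (\<forall>G\<in>#\<E>. complete_components n G) \<and>
     (\<forall>G. count \<E> G \<le> 1) \<and>
     (\<forall>G1\<in>#\<E>. \<forall>G2\<in>#\<E>. G1 \<noteq> G2 \<longrightarrow> \<not> prec n G1 G2)"

definition proper_coloring :: "nat \<Rightarrow> plurigraph \<Rightarrow> (nat \<Rightarrow> nat) \<Rightarrow> bool" where
  "proper_coloring n \<E> f \<longleftrightarrow> f \<in> {1..n} \<rightarrow>\<^sub>E {1..} \<and>
     (\<forall>G\<in>#\<E>. \<exists>u v. Upair u v \<in># G \<and> f u \<noteq> f v)"

text \<open>Y_G as a noncommutative formal power series in y_1, y_2, ...: represented by its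
coefficient function on words (monomials y_{w_1}...y_{w_k} encoded as lists w).\<close>
definition Y :: "nat \<Rightarrow> plurigraph \<Rightarrow> nat list \<Rightarrow> nat" where
  "Y n \<E> w = card {f. proper_coloring n \<E> f \<and> map f [1..<n+1] = w}"

end

theory Submission
  imports Defs
begin

text \<open>For a graph \<open>G\<close> of \<open>\<E>\<close>, colour every vertex by the least vertex of its component.
  This colouring is monochromatic on every edge of \<open>G\<close>, hence improper for \<open>\<E>\<close>; so if
  \<open>Y\<^sub>\<E>\<^sub>1 = Y\<^sub>\<E>\<^sub>2\<close> (which forces both plurigraphs to have the same proper colourings) some
  \<open>G' \<in> \<E>\<^sub>2\<close> has all its edges inside components of \<open>G\<close>. Going back and forth yields
  \<open>G'' \<in> \<E>\<^sub>1\<close> with \<open>G'' \<prec> G\<close>, so \<open>G'' = G\<close> by simplicity, and completeness of the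
  components then forces \<open>G' = G\<close>.\<close>

lemma symp_adj: "symp (adj G)"
  by (rule sympI) (metis adj_def Upair_inject)

lemma equivp_connected: "equivp (adj G)\<^sup>*\<^sup>*"
  by (rule equivp_rtranclp[OF symp_adj])

lemma is_graph_edge_in_range:
  "is_graph n G \<Longrightarrow> Upair u v \<in># G \<Longrightarrow> u \<in> {1..n} \<and> v \<in> {1..n}"
  unfolding is_graph_def by fastforce

lemma connected_in_range:
  assumes "is_graph n G" "(adj G)\<^sup>*\<^sup>* v w"
  shows "w = v \<or> w \<in> {1..n}"
  using assms(2)
proof induction
  case (step y z)
  then show ?case
    using is_graph_edge_in_range[OF assms(1)] by (simp add: adj_def)
qed simp

lemma complete_components_edge_if_connected:
  assumes "complete_components n G" "u \<in> {1..n}" "v \<in> {1..n}" "u \<noteq> v" "(adj G)\<^sup>*\<^sup>* u v"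
  shows "Upair u v \<in># G"
proof -
  define C where "C = {w \<in> {1..n}. (adj G)\<^sup>*\<^sup>* u w}"
  have "C \<in> components n G"
    using assms(2) unfolding components_def C_def by blast
  moreover have "u \<in> C" "v \<in> C"
    using assms(2,3,5) unfolding C_def by auto
  moreover have "\<forall>C\<in>components n G. \<forall>u\<in>C. \<forall>v\<in>C. u \<noteq> v \<longrightarrow> Upair u v \<in># G"
    using assms(1) unfolding complete_components_def by simp
  ultimately show ?thesis
    using assms(4) by blast
qed

lemma multiset_eq_if_set_mset_eq_count_le_1:
  assumes "\<And>x. count A x \<le> 1" "\<And>x. count B x \<le> 1" "set_mset A = set_mset B"
  shows "A = B"
proof (rule multiset_eqI)
  fix x
  have "count A x > 0 \<longleftrightarrow> count B x > 0"
    using assms(3) by (metis count_greater_zero_iff)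
  then show "count A x = count B x"
    using assms(1,2)[of x] by linarith
qed

definition edges_in_components :: "graph \<Rightarrow> graph \<Rightarrow> bool" where
  "edges_in_components G' G \<longleftrightarrow> adj G' \<le> (adj G)\<^sup>*\<^sup>*"

lemma edges_in_components_connected:
  "edges_in_components G' G \<Longrightarrow> (adj G')\<^sup>*\<^sup>* \<le> (adj G)\<^sup>*\<^sup>*"
  unfolding edges_in_components_def by (metis rtranclp_idemp rtranclp_mono)

lemma edges_in_components_trans:
  "edges_in_components G'' G' \<Longrightarrow> edges_in_components G' G \<Longrightarrow> edges_in_components G'' G"
  using edges_in_components_connected unfolding edges_in_components_def
  by (metis order_trans)

lemma prec_if_edges_in_components:
  assumes "edges_in_components G' G"
  shows "prec n G' G"
  unfolding prec_def components_def
proof clarify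
  fix v assume "v \<in> {1..n}"
  then have "{u \<in> {1..n}. (adj G)\<^sup>*\<^sup>* v u} \<in> {{u \<in> {1..n}. (adj G)\<^sup>*\<^sup>* v u} |v. v \<in> {1..n}}"
    by blast
  moreover have "{u \<in> {1..n}. (adj G')\<^sup>*\<^sup>* v u} \<subseteq> {u \<in> {1..n}. (adj G)\<^sup>*\<^sup>* v u}"
    using edges_in_components_connected[OF assms] by blast
  ultimately show "\<exists>D\<in>{{u \<in> {1..n}. (adj G)\<^sup>*\<^sup>* v u} |v. v \<in> {1..n}}.
      {u \<in> {1..n}. (adj G')\<^sup>*\<^sup>* v u} \<subseteq> D"
    by blast
qed

lemma set_mset_subset_if_edges_in_components:
  assumes "is_graph n G'" "complete_components n G'" "complete_components n G"
    and "edges_in_components G' G"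
  shows "set_mset G' \<subseteq> set_mset G"
proof
  fix e assume "e \<in># G'"
  then obtain u v where e: "e = Upair u v" "Upair u v \<in># G'"
    by (cases e) auto
  have "u \<noteq> v"
    using e(2) assms(2) unfolding complete_components_def by blast
  moreover have "(adj G)\<^sup>*\<^sup>* u v"
    using e(2) assms(4) unfolding edges_in_components_def by (simp add: adj_def le_fun_def)
  ultimately show "e \<in># G"
    using complete_components_edge_if_connected[OF assms(3)]
      is_graph_edge_in_range[OF assms(1) e(2)] e(1) by simp
qed

lemma edges_in_components_antisym:
  assumes "is_graph n G" "complete_components n G"
    and "is_graph n G'" "complete_components n G'"
    and "edges_in_components G G'" "edges_in_components G' G"
  shows "G = G'"
proof (rule multiset_eq_if_set_mset_eq_count_le_1)
  show "count G x \<le> 1" "count G' x \<le> 1" for x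
    using assms(2,4) by (simp_all add: complete_components_def)
  show "set_mset G = set_mset G'"
    using set_mset_subset_if_edges_in_components[OF assms(1,2,4,5)]
      set_mset_subset_if_edges_in_components[OF assms(3,4,2,6)] by (rule subset_antisym)
qed

lemma PiE_eq_if_map_upt_eq:
  assumes "f \<in> {1..n} \<rightarrow>\<^sub>E A" "g \<in> {1..n} \<rightarrow>\<^sub>E B" "map f [1..<n+1] = map g [1..<n+1]"
  shows "f = g"
proof
  fix x
  show "f x = g x"
  proof (cases "x \<in> {1..n}")
    case True
    then have "x \<in> set [1..<n+1]"
      by auto
    moreover have "\<forall>y\<in>set [1..<n+1]. f y = g y"
      using assms(3) by (simp only: map_eq_conv)
    ultimately show ?thesis
      by blast
  next
    case False
    then show ?thesis
      using PiE_arb[OF assms(1)] PiE_arb[OF assms(2)] by metis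
  qed
qed

lemma Y_coloring_word:
  assumes "f \<in> {1..n} \<rightarrow>\<^sub>E {1..}"
  shows "Y n \<E> (map f [1..<n+1]) = (if proper_coloring n \<E> f then 1 else 0)"
proof -
  have "g = f" if "proper_coloring n \<E> g" "map g [1..<n+1] = map f [1..<n+1]" for g
    using that PiE_eq_if_map_upt_eq[OF _ assms] unfolding proper_coloring_def by blast
  then have "{g. proper_coloring n \<E> g \<and> map g [1..<n+1] = map f [1..<n+1]}
          = (if proper_coloring n \<E> f then {f} else {})"
    by auto
  then show ?thesis
    unfolding Y_def by simp
qed

lemma proper_coloring_eq_if_Y_eq:
  assumes "Y n \<E>1 = Y n \<E>2"
  shows "proper_coloring n \<E>1 = proper_coloring n \<E>2"
proof
  fix f
  have "proper_coloring n \<E> f \<longleftrightarrow>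
          f \<in> {1..n} \<rightarrow>\<^sub>E {1..} \<and> Y n \<E> (map f [1..<n+1]) = 1" for \<E>
  proof (cases "f \<in> {1..n} \<rightarrow>\<^sub>E {1..}")
    case True
    then show ?thesis
      using Y_coloring_word[OF True] by simp
  next
    case False
    then show ?thesis
      unfolding proper_coloring_def by simp
  qed
  then show "proper_coloring n \<E>1 f = proper_coloring n \<E>2 f"
    using assms by simp
qed

definition component_coloring :: "nat \<Rightarrow> graph \<Rightarrow> nat \<Rightarrow> nat" where
  "component_coloring n G v = (if v \<in> {1..n} then LEAST w. (adj G)\<^sup>*\<^sup>* v w else undefined)"

lemma component_coloring_PiE:
  assumes "is_graph n G"
  shows "component_coloring n G \<in> {1..n} \<rightarrow>\<^sub>E {1..}"
proof (rule PiE_I)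
  fix v assume v: "v \<in> {1..n}"
  have "(adj G)\<^sup>*\<^sup>* v (LEAST w. (adj G)\<^sup>*\<^sup>* v w)"
    by (rule LeastI[of _ v]) simp
  then show "component_coloring n G v \<in> {1..}"
    using connected_in_range[OF assms] v unfolding component_coloring_def by fastforce
qed (auto simp: component_coloring_def)

lemma component_coloring_eq_iff:
  assumes "u \<in> {1..n}" "v \<in> {1..n}"
  shows "component_coloring n G u = component_coloring n G v \<longleftrightarrow> (adj G)\<^sup>*\<^sup>* u v"
proof -
  let ?R = "(adj G)\<^sup>*\<^sup>*"
  have R: "?R x y \<longleftrightarrow> ?R x = ?R y" for x y
    using equivp_connected by (simp add: equivp_def)
  have least: "?R x (Least (?R x))" for x
    by (rule LeastI[of _ x]) simp
  have "?R u = ?R v" if "Least (?R u) = Least (?R v)"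
  proof -
    have "?R u = ?R (Least (?R u))" "?R v = ?R (Least (?R u))"
      using least[of u] least[of v] that R by metis+
    then show ?thesis
      by simp
  qed
  then have "Least (?R u) = Least (?R v) \<longleftrightarrow> ?R u = ?R v"
    by auto
  then show ?thesis
    using assms R unfolding component_coloring_def by simp
qed

lemma not_proper_component_coloring:
  assumes "is_plurigraph n \<E>" "G \<in># \<E>"
  shows "\<not> proper_coloring n \<E> (component_coloring n G)"
proof
  assume "proper_coloring n \<E> (component_coloring n G)"
  then obtain u v where "Upair u v \<in># G" "component_coloring n G u \<noteq> component_coloring n G v"
    using assms(2) unfolding proper_coloring_def by blast
  moreover have "is_graph n G"
    using assms unfolding is_plurigraph_def by blast
  ultimately show False
    using component_coloring_eq_iff is_graph_edge_in_range
    by (metis adj_def r_into_rtranclp)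
qed

lemma ex_edges_in_components_if_same_proper_colorings:
  assumes "is_plurigraph n \<E>1" "is_plurigraph n \<E>2"
    and "proper_coloring n \<E>1 = proper_coloring n \<E>2" "G \<in># \<E>1"
  shows "\<exists>G'\<in>#\<E>2. edges_in_components G' G"
proof -
  let ?f = "component_coloring n G"
  have "?f \<in> {1..n} \<rightarrow>\<^sub>E {1..}"
    using assms(1,4) component_coloring_PiE unfolding is_plurigraph_def by blast
  moreover have "\<not> proper_coloring n \<E>2 ?f"
    using not_proper_component_coloring[OF assms(1,4)] assms(3) by simp
  ultimately obtain G' where G': "G' \<in># \<E>2" "\<forall>u v. Upair u v \<in># G' \<longrightarrow> ?f u = ?f v"
    unfolding proper_coloring_def by blast
  have "is_graph n G'"
    using assms(2) G'(1) unfolding is_plurigraph_def by blast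
  then have "edges_in_components G' G"
    using G'(2) is_graph_edge_in_range component_coloring_eq_iff
    unfolding edges_in_components_def by (auto simp: adj_def)
  with G'(1) show ?thesis ..
qed

lemma mem_if_same_proper_colorings:
  assumes s1: "simple_plurigraph n \<E>1" and s2: "simple_plurigraph n \<E>2"
    and same: "proper_coloring n \<E>1 = proper_coloring n \<E>2" and G: "G \<in># \<E>1"
  shows "G \<in># \<E>2"
proof -
  have p: "is_plurigraph n \<E>1" "is_plurigraph n \<E>2"
    using s1 s2 unfolding simple_plurigraph_def by blast+
  obtain G' where G': "G' \<in># \<E>2" "edges_in_components G' G"
    using ex_edges_in_components_if_same_proper_colorings[OF p same G] by blast
  obtain G'' where G'': "G'' \<in># \<E>1" "edges_in_components G'' G'"
    using ex_edges_in_components_if_same_proper_colorings[OF p(2,1) same[symmetric] G'(1)] by blast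
  have "prec n G'' G"
    using edges_in_components_trans[OF G''(2) G'(2)] by (rule prec_if_edges_in_components)
  then have "G'' = G"
    using s1 G G''(1) unfolding simple_plurigraph_def by blast
  moreover have "is_graph n G" "complete_components n G"
    using s1 G unfolding simple_plurigraph_def is_plurigraph_def by auto
  moreover have "is_graph n G'" "complete_components n G'"
    using s2 G'(1) unfolding simple_plurigraph_def is_plurigraph_def by auto
  ultimately have "G = G'"
    using edges_in_components_antisym G'(2) G''(2) by blast
  with G'(1) show ?thesis by simp
qed

theorem proposition4p1:
  fixes n :: nat and \<E>1 \<E>2 :: plurigraph
  assumes "simple_plurigraph n \<E>1" and "simple_plurigraph n \<E>2"
    and "Y n \<E>1 = Y n \<E>2"
  shows "\<E>1 = \<E>2"
proof -
  have same: "proper_coloring n \<E>1 = proper_coloring n \<E>2"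
    using assms(3) by (rule proper_coloring_eq_if_Y_eq)
  have "set_mset \<E>1 = set_mset \<E>2"
    using mem_if_same_proper_colorings[OF assms(1,2) same]
      mem_if_same_proper_colorings[OF assms(2,1) same[symmetric]] by blast
  moreover have "count \<E>1 G \<le> 1" "count \<E>2 G \<le> 1" for G
    using assms(1,2) unfolding simple_plurigraph_def by blast+
  ultimately show ?thesis
    using multiset_eq_if_set_mset_eq_count_le_1 by blast
qed

end
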